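(* Let $d\ge 2$ and $F\in(0,1)$, and let $\rho_{\mathrm{dp}}(F)=F|\mathrm{GHZ}_d\rangle\langle\mathrm{GHZ}_d|+\frac{1-F}{2^d-1}\big(I-|\mathrm{GHZ}_d\rangle\langle\mathrm{GHZ}_d|\big)$ be the $d$-qubit depolarized GHZ state, where $|\mathrm{GHZ}_d\rangle=(|0\cdots0\rangle+|1\cdots1\rangle)/\sqrt2$. Let $C(F)=\sum_s\frac{4\lambda^+_s\lambda^-_s}{\lambda^+_s+\lambda^-_s}$ be computed from the eigenvalues $\lambda^\pm_s$ of $\rho_{\mathrm{dp}}(F)$ on the GHZ basis states $|G^\pm_s\rangle$, and let $\eta(F)=d(1-C(F))$. Define $$F_{\mathrm{th,dp}}=2^{-d}+\frac{(2^d-1)\left(2^d-2+\sqrt{(2^d-2)^2+2^{d+3}d}\right)}{2^{2d+1}d}.$$ Then $\eta(F)>1$ if and only if $F>F_{\mathrm{th,dp}}$.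
   Context: GHZ basis on $d$ qubits: for a bit string $s\in\{0,1\}^d$ with complement $\bar s$, and one representative $s$ chosen from each pair $\{s,\bar s\}$, set $|G^\pm_s\rangle=(|s\rangle\pm|\bar s\rangle)/\sqrt2$; these $2^d$ states form an orthonormal basis and $\rho_{\mathrm{dp}}(F)$ is diagonal in it, with eigenvalue $\lambda^\pm_s$ on $|G^\pm_s\rangle$; the sum defining $C$ runs over the $2^{d-1}$ representatives. Interpretation: $\eta(F)$ is the ratio of the quantum Fisher information $d(1-C)$ for estimating $\theta_1=\frac{1}{\sqrt d}\sum_{i}x_i$ (with the phases $x_i$ encoded by $U(x)=\exp[-\frac{i}{2}\sum_i x_i\sigma_z^{(i)}]$) to the value $1$ achieved by the optimal local strategy, so $\eta>1$ means quantum advantage. *)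

theory Defs
  imports Complex_Main
begin

text \<open>Computational basis of d qubits: bit strings = bool lists of length d.
  States/operators are real-valued functions on bit strings (all amplitudes here are real).\<close>

definition bitstrings :: "nat \<Rightarrow> bool list set" where
  "bitstrings d = {s. length s = d}"

definition comp :: "bool list \<Rightarrow> bool list" where
  "comp s = map Not s"

definition ket :: "bool list \<Rightarrow> bool list \<Rightarrow> real" where
  "ket s = (\<lambda>t. if t = s then 1 else 0)"

definition ghz :: "nat \<Rightarrow> bool list \<Rightarrow> real" where
  "ghz d = (\<lambda>t. (ket (replicate d False) t + ket (replicate d True) t) / sqrt 2)"

definition proj :: "(bool list \<Rightarrow> real) \<Rightarrow> bool list \<Rightarrow> bool list \<Rightarrow> real" where
  "proj v = (\<lambda>a b. v a * v b)"

definition ident :: "bool list \<Rightarrow> bool list \<Rightarrow> real" where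
  "ident = (\<lambda>a b. if a = b then 1 else 0)"

definition rho_dp :: "nat \<Rightarrow> real \<Rightarrow> bool list \<Rightarrow> bool list \<Rightarrow> real" where
  "rho_dp d F = (\<lambda>a b. F * proj (ghz d) a b
      + (1 - F) / (2 ^ d - 1) * (ident a b - proj (ghz d) a b))"

definition apply_op :: "nat \<Rightarrow> (bool list \<Rightarrow> bool list \<Rightarrow> real) \<Rightarrow> (bool list \<Rightarrow> real) \<Rightarrow> bool list \<Rightarrow> real" where
  "apply_op d M v = (\<lambda>a. \<Sum>b\<in>bitstrings d. M a b * v b)"

definition G_plus :: "bool list \<Rightarrow> bool list \<Rightarrow> real" where
  "G_plus s = (\<lambda>t. (ket s t + ket (comp s) t) / sqrt 2)"

definition G_minus :: "bool list \<Rightarrow> bool list \<Rightarrow> real" where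
  "G_minus s = (\<lambda>t. (ket s t - ket (comp s) t) / sqrt 2)"

definition eigval_on :: "nat \<Rightarrow> (bool list \<Rightarrow> bool list \<Rightarrow> real) \<Rightarrow> (bool list \<Rightarrow> real) \<Rightarrow> real" where
  "eigval_on d M v = (THE l. \<forall>a\<in>bitstrings d. apply_op d M v a = l * v a)"

definition lam_plus :: "nat \<Rightarrow> real \<Rightarrow> bool list \<Rightarrow> real" where
  "lam_plus d F s = eigval_on d (rho_dp d F) (G_plus s)"

definition lam_minus :: "nat \<Rightarrow> real \<Rightarrow> bool list \<Rightarrow> real" where
  "lam_minus d F s = eigval_on d (rho_dp d F) (G_minus s)"

text \<open>Representatives of the pairs {s, comp s}: the strings whose first bit is 0.\<close>
definition reps :: "nat \<Rightarrow> bool list set" where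
  "reps d = {s \<in> bitstrings d. hd s = False}"

definition C_dp :: "nat \<Rightarrow> real \<Rightarrow> real" where
  "C_dp d F = (\<Sum>s\<in>reps d. 4 * lam_plus d F s * lam_minus d F s
                               / (lam_plus d F s + lam_minus d F s))"

definition eta_dp :: "nat \<Rightarrow> real \<Rightarrow> real" where
  "eta_dp d F = real d * (1 - C_dp d F)"

definition F_th_dp :: "nat \<Rightarrow> real" where
  "F_th_dp d = 1 / 2 ^ d
     + (2 ^ d - 1) * (2 ^ d - 2 + sqrt ((2 ^ d - 2)\<^sup>2 + 2 ^ (d + 3) * real d))
       / (2 ^ (2 * d + 1) * real d)"

end

theory Submission
  imports Defs
begin

text \<open>The depolarized state acts as \<open>F\<close> on the GHZ vector and as
  \<open>q = (1 - F) / (2\<^sup>d - 1)\<close> on its orthogonal complement. Hence every GHZ-basis vector is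
  an eigenvector, with eigenvalue \<open>q\<close> except for \<open>F\<close> at the GHZ vector itself, and
  \<open>C = 4 F q / (F + q) + (2\<^sup>d - 2) q\<close>. Multiplying \<open>\<eta> - 1\<close> by the positive number
  \<open>(1 + (2\<^sup>d - 2) F) (2\<^sup>d - 1)\<close> turns it into a quadratic in \<open>F\<close> with positive leading
  coefficient and negative constant term, whose positive root is the threshold.\<close>

lemma finite_bitstrings: "finite (bitstrings d)"
proof -
  have "bitstrings d = {xs. set xs \<subseteq> UNIV \<and> length xs = d}"
    by (simp add: bitstrings_def)
  then show ?thesis
    by (simp only: finite_lists_length_eq finite_UNIV)
qed

lemma card_bitstrings: "card (bitstrings d) = 2 ^ d"
  using card_lists_length_eq[of "UNIV :: bool set" d] by (simp add: bitstrings_def)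

lemma replicate_in_bitstrings: "replicate d b \<in> bitstrings d"
  by (simp add: bitstrings_def)

lemma comp_in_bitstrings: "s \<in> bitstrings d \<Longrightarrow> comp s \<in> bitstrings d"
  by (simp add: bitstrings_def comp_def)

lemma comp_comp [simp]: "comp (comp s) = s"
  by (simp add: comp_def o_def)

lemma comp_eq_iff: "comp s = t \<longleftrightarrow> s = comp t"
  by (metis comp_comp)

lemma comp_neq_self: "s \<noteq> [] \<Longrightarrow> comp s \<noteq> s"
  by (cases s) (auto simp: comp_def)

lemma ket_comp: "ket s (comp t) = ket (comp s) t"
  by (auto simp: ket_def comp_eq_iff)

lemma G_plus_comp: "G_plus s (comp t) = G_plus s t"
  by (simp add: G_plus_def ket_comp)

lemma G_minus_comp: "G_minus s (comp t) = - G_minus s t"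
  by (simp add: G_minus_def ket_comp field_simps)

lemma ghz_eq_G_plus: "ghz d = G_plus (replicate d False)"
  by (simp add: ghz_def G_plus_def comp_def)

lemma sum_ket_mult:
  assumes "s \<in> bitstrings d"
  shows "(\<Sum>b\<in>bitstrings d. ket s b * v b) = v s"
proof -
  have "(\<Sum>b\<in>bitstrings d. ket s b * v b) = (\<Sum>b\<in>bitstrings d. if s = b then v b else 0)"
    by (rule sum.cong) (auto simp: ket_def)
  then show ?thesis
    using assms finite_bitstrings[of d] by simp
qed

lemma ident_eq_ket: "ident a = ket a"
  by (auto simp: ident_def ket_def)

lemma sum_G_plus_mult:
  assumes "s \<in> bitstrings d"
  shows "(\<Sum>b\<in>bitstrings d. G_plus s b * v b) = (v s + v (comp s)) / sqrt 2"
  using assms comp_in_bitstrings[OF assms]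
  by (simp add: G_plus_def add_divide_distrib distrib_right sum.distrib sum_ket_mult
      flip: sum_divide_distrib)

lemma sum_ghz_mult:
  "(\<Sum>b\<in>bitstrings d. ghz d b * v b)
    = (v (replicate d False) + v (comp (replicate d False))) / sqrt 2"
  unfolding ghz_eq_G_plus by (rule sum_G_plus_mult[OF replicate_in_bitstrings])

lemma sum_ghz_G_plus:
  "(\<Sum>b\<in>bitstrings d. ghz d b * G_plus s b) = ket s (replicate d False) + ket (comp s) (replicate d False)"
  unfolding sum_ghz_mult G_plus_comp by (simp add: G_plus_def)

lemma sum_ghz_G_minus: "(\<Sum>b\<in>bitstrings d. ghz d b * G_minus s b) = 0"
  unfolding sum_ghz_mult G_minus_comp by simp

lemma apply_rho_dp:
  fixes F :: real
  assumes "a \<in> bitstrings d"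
  defines "q \<equiv> (1 - F) / (2 ^ d - 1)"
  shows "apply_op d (rho_dp d F) v a
    = q * v a + (F - q) * ghz d a * (\<Sum>b\<in>bitstrings d. ghz d b * v b)"
proof -
  have "apply_op d (rho_dp d F) v a
      = (\<Sum>b\<in>bitstrings d. q * (ket a b * v b) + (F - q) * ghz d a * (ghz d b * v b))"
    unfolding apply_op_def rho_dp_def proj_def ident_eq_ket q_def[symmetric]
    by (rule sum.cong) (auto simp: algebra_simps)
  also have "\<dots> = q * v a + (F - q) * ghz d a * (\<Sum>b\<in>bitstrings d. ghz d b * v b)"
    using assms(1) by (simp add: sum.distrib sum_ket_mult flip: sum_distrib_left)
  finally show ?thesis .
qed

lemma eigval_on_eqI:
  assumes "s \<in> bitstrings d" "v s \<noteq> 0" "\<forall>a\<in>bitstrings d. apply_op d M v a = l * v a"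
  shows "eigval_on d M v = l"
  unfolding eigval_on_def
proof (rule the_equality)
  show "\<forall>a\<in>bitstrings d. apply_op d M v a = l * v a"
    by fact
  fix l' assume "\<forall>a\<in>bitstrings d. apply_op d M v a = l' * v a"
  then have "l' * v s = l * v s"
    using assms by auto
  then show "l' = l"
    using assms(2) by simp
qed

lemma G_plus_self_nonzero: "s \<noteq> [] \<Longrightarrow> G_plus s s \<noteq> 0"
  using comp_neq_self[of s] by (simp add: G_plus_def ket_def)

lemma G_minus_self_nonzero: "s \<noteq> [] \<Longrightarrow> G_minus s s \<noteq> 0"
  using comp_neq_self[of s] by (simp add: G_minus_def ket_def)

lemma lam_plus_ghz:
  assumes "d \<noteq> 0"
  shows "lam_plus d F (replicate d False) = F"
  unfolding lam_plus_def
proof (rule eigval_on_eqI[where s = "replicate d False"])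
  show "replicate d False \<in> bitstrings d"
    by (rule replicate_in_bitstrings)
  show "G_plus (replicate d False) (replicate d False) \<noteq> 0"
    using assms by (simp add: G_plus_self_nonzero)
  have "comp (replicate d False) \<noteq> replicate d False"
    using assms by (simp add: comp_neq_self)
  then have "(\<Sum>b\<in>bitstrings d. ghz d b * G_plus (replicate d False) b) = 1"
    by (simp add: sum_ghz_G_plus ket_def)
  then show "\<forall>a\<in>bitstrings d. apply_op d (rho_dp d F) (G_plus (replicate d False)) a
      = F * G_plus (replicate d False) a"
    by (simp add: apply_rho_dp ghz_eq_G_plus algebra_simps)
qed

lemma lam_plus_eq:
  assumes "s \<in> bitstrings d" "s \<noteq> replicate d False" "comp s \<noteq> replicate d False"
  shows "lam_plus d F s = (1 - F) / (2 ^ d - 1)"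
  unfolding lam_plus_def
proof (rule eigval_on_eqI[where s = s])
  show "G_plus s s \<noteq> 0"
    using assms by (intro G_plus_self_nonzero) (auto simp: bitstrings_def)
  show "\<forall>a\<in>bitstrings d. apply_op d (rho_dp d F) (G_plus s) a = (1 - F) / (2 ^ d - 1) * G_plus s a"
    using assms by (simp add: apply_rho_dp sum_ghz_G_plus ket_def)
qed fact

lemma lam_minus_eq:
  assumes "s \<in> bitstrings d" "d \<noteq> 0"
  shows "lam_minus d F s = (1 - F) / (2 ^ d - 1)"
  unfolding lam_minus_def
proof (rule eigval_on_eqI[where s = s])
  show "G_minus s s \<noteq> 0"
    using assms by (intro G_minus_self_nonzero) (auto simp: bitstrings_def)
  show "\<forall>a\<in>bitstrings d. apply_op d (rho_dp d F) (G_minus s) a = (1 - F) / (2 ^ d - 1) * G_minus s a"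
    by (simp add: apply_rho_dp sum_ghz_G_minus)
qed fact

lemma reps_eq_image: "d \<noteq> 0 \<Longrightarrow> reps d = (#) False ` bitstrings (d - 1)"
  by (cases d) (auto simp: reps_def bitstrings_def length_Suc_conv)

lemma card_reps: "d \<noteq> 0 \<Longrightarrow> card (reps d) = 2 ^ (d - 1)"
  by (simp add: reps_eq_image card_image card_bitstrings)

lemma finite_reps: "finite (reps d)"
  using finite_bitstrings[of d] by (rule rev_finite_subset) (auto simp: reps_def)

lemma replicate_False_in_reps: "d \<noteq> 0 \<Longrightarrow> replicate d False \<in> reps d"
  by (cases d) (auto simp: reps_def bitstrings_def)

lemma comp_reps_neq_replicate_False:
  assumes "s \<in> reps d" "d \<noteq> 0"
  shows "comp s \<noteq> replicate d False"
proof
  assume "comp s = replicate d False"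
  with assms show False
    by (cases s) (auto simp: reps_def bitstrings_def comp_def)
qed

lemma C_dp_eq:
  fixes F :: real
  assumes "d \<noteq> 0"
  defines "q \<equiv> (1 - F) / (2 ^ d - 1)"
  shows "C_dp d F = 4 * F * q / (F + q) + (2 ^ d - 2) * q"
proof -
  define z where "z = replicate d False"
  let ?f = "\<lambda>s. 4 * lam_plus d F s * lam_minus d F s / (lam_plus d F s + lam_minus d F s)"
  have z: "z \<in> reps d"
    unfolding z_def using assms(1) by (rule replicate_False_in_reps)
  have fz: "?f z = 4 * F * q / (F + q)"
    using assms(1) by (simp add: z_def q_def lam_plus_ghz lam_minus_eq replicate_in_bitstrings)
  have fs: "?f s = 2 * q" if "s \<in> reps d - {z}" for s
  proof -
    have "lam_plus d F s = q" "lam_minus d F s = q"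
      using that assms(1) comp_reps_neq_replicate_False[of s d]
      by (auto simp: z_def q_def reps_def intro: lam_plus_eq lam_minus_eq)
    then show ?thesis
      by simp
  qed
  have "real (card (reps d - {z})) = 2 ^ (d - 1) - 1"
    using z assms(1) finite_reps[of d] by (simp add: card_reps)
  moreover have "(2 :: real) ^ d = 2 * 2 ^ (d - 1)"
    using assms(1) by (simp flip: power_Suc)
  ultimately have card: "2 * real (card (reps d - {z})) = 2 ^ d - 2"
    by simp
  have "C_dp d F = ?f z + (\<Sum>s\<in>reps d - {z}. ?f s)"
    unfolding C_dp_def using sum.remove[OF finite_reps z] .
  also have "\<dots> = 4 * F * q / (F + q) + (\<Sum>s\<in>reps d - {z}. 2 * q)"
    using fz fs by simp
  also have "\<dots> = 4 * F * q / (F + q) + (2 ^ d - 2) * q"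
    by (simp flip: card)
  finally show ?thesis .
qed

lemma quadratic_pos_iff_gt_root:
  fixes a b c x :: real
  assumes "0 < a" "c < 0" "0 \<le> x"
  shows "0 < a * x\<^sup>2 + b * x + c \<longleftrightarrow> (- b + sqrt (b\<^sup>2 - 4 * a * c)) / (2 * a) < x"
proof -
  define s where "s = sqrt (b\<^sup>2 - 4 * a * c)"
  define r1 where "r1 = (- b + s) / (2 * a)"
  define r2 where "r2 = (- b - s) / (2 * a)"
  have "4 * a * c < 0"
    using assms by (simp add: mult_pos_neg)
  then have s2: "s\<^sup>2 = b\<^sup>2 - 4 * a * c"
    unfolding s_def by (intro real_sqrt_pow2) (smt (verit) zero_le_power2)
  have "sqrt (b\<^sup>2) < s"
    unfolding s_def using \<open>4 * a * c < 0\<close> by (intro real_sqrt_less_mono) simp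
  then have "r2 < 0"
    unfolding r2_def using assms(1) by (simp add: divide_neg_pos)
  have sum: "a * (r1 + r2) = - b"
    using assms(1) by (simp add: r1_def r2_def add_divide_distrib[symmetric])
  have "r1 * r2 = (b\<^sup>2 - s\<^sup>2) / (4 * a\<^sup>2)"
    by (simp add: r1_def r2_def power2_eq_square algebra_simps)
  then have prod: "a * (r1 * r2) = c"
    using assms(1) s2 by (simp add: power2_eq_square)
  have "a * (x - r1) * (x - r2) = a * x\<^sup>2 - a * (r1 + r2) * x + a * (r1 * r2)"
    by (simp add: algebra_simps power2_eq_square)
  then have factor: "a * x\<^sup>2 + b * x + c = a * (x - r2) * (x - r1)"
    by (simp add: sum prod mult.commute mult.left_commute)
  have "0 < a * (x - r2)"
    using assms \<open>r2 < 0\<close> by simp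
  then have "0 < a * (x - r2) * (x - r1) \<longleftrightarrow> r1 < x"
    by (metis diff_gt_0_iff_gt mult_pos_pos zero_less_mult_pos)
  then show ?thesis
    unfolding factor r1_def s_def .
qed

lemma eta_sub_one_mult_eq_quadratic:
  fixes n N F :: real
  defines "q \<equiv> (1 - F) / (N - 1)"
  assumes "N \<noteq> 1" "1 + (N - 2) * F \<noteq> 0"
  shows "(n * (1 - (4 * F * q / (F + q) + (N - 2) * q)) - 1) * ((1 + (N - 2) * F) * (N - 1))
    = n * N\<^sup>2 * F\<^sup>2 - (2 * n * N + (N - 1) * (N - 2)) * F - (N - 1 - n)"
proof -
  define C where "C = 4 * F * q / (F + q) + (N - 2) * q"
  define X where "X = 1 + (N - 2) * F"
  define Y where "Y = N - 1"
  have "X \<noteq> 0" "Y \<noteq> 0"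
    using assms by (auto simp: X_def Y_def)
  have q: "q = (1 - F) / Y" and Fq: "F + q = X / Y"
    using \<open>Y \<noteq> 0\<close> by (simp_all add: q_def X_def Y_def field_simps)
  have frac: "4 * F * q / (F + q) = 4 * F * (1 - F) / X"
    unfolding Fq using \<open>Y \<noteq> 0\<close> by (simp add: q)
  have CXY: "C * (X * Y) = 4 * F * (1 - F) * Y + (N - 2) * (1 - F) * X"
    unfolding C_def frac unfolding q using \<open>X \<noteq> 0\<close> \<open>Y \<noteq> 0\<close> by (simp add: field_simps)
  have "(n * (1 - C) - 1) * (X * Y) = n * (X * Y) - n * (C * (X * Y)) - X * Y"
    by (simp add: algebra_simps)
  also have "\<dots> = n * N\<^sup>2 * F\<^sup>2 - (2 * n * N + (N - 1) * (N - 2)) * F - (N - 1 - n)"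
    unfolding CXY unfolding X_def Y_def by (simp add: algebra_simps power2_eq_square)
  finally show ?thesis
    unfolding C_def X_def Y_def .
qed

lemma eta_gt_one_iff_threshold:
  fixes n N F :: real
  defines "q \<equiv> (1 - F) / (N - 1)"
  assumes n: "0 < n" and N: "n + 2 \<le> N" and F: "0 \<le> F"
  shows "1 < n * (1 - (4 * F * q / (F + q) + (N - 2) * q)) \<longleftrightarrow>
    1 / N + (N - 1) * (N - 2 + sqrt ((N - 2)\<^sup>2 + 8 * N * n)) / (2 * N\<^sup>2 * n) < F"
proof -
  define B where "B = 2 * n * N + (N - 1) * (N - 2)"
  define R where "R = (N - 2)\<^sup>2 + 8 * N * n"
  have "0 < N - 1" "0 < 1 + (N - 2) * F"
    using n N F by (auto intro: add_pos_nonneg)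
  then have "1 < n * (1 - (4 * F * q / (F + q) + (N - 2) * q))
      \<longleftrightarrow> 0 < (n * (1 - (4 * F * q / (F + q) + (N - 2) * q)) - 1) * ((1 + (N - 2) * F) * (N - 1))"
    by (metis diff_gt_0_iff_gt mult_pos_pos zero_less_mult_pos2)
  also have "\<dots> \<longleftrightarrow> 0 < n * N\<^sup>2 * F\<^sup>2 + (- B) * F + (- (N - 1 - n))"
    using \<open>0 < N - 1\<close> \<open>0 < 1 + (N - 2) * F\<close>
    unfolding q_def by (subst eta_sub_one_mult_eq_quadratic) (auto simp: B_def algebra_simps)
  also have "\<dots> \<longleftrightarrow> (B + sqrt (B\<^sup>2 - 4 * (n * N\<^sup>2) * (- (N - 1 - n)))) / (2 * (n * N\<^sup>2)) < F"
    using n N F by (subst quadratic_pos_iff_gt_root) auto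
  also have "B\<^sup>2 - 4 * (n * N\<^sup>2) * (- (N - 1 - n)) = (N - 1)\<^sup>2 * R"
    by (simp add: B_def R_def power2_eq_square algebra_simps)
  also have "sqrt ((N - 1)\<^sup>2 * R) = (N - 1) * sqrt R"
    using \<open>0 < N - 1\<close> by (simp add: real_sqrt_mult)
  also have "(B + (N - 1) * sqrt R) / (2 * (n * N\<^sup>2)) =
      1 / N + (N - 1) * (N - 2 + sqrt R) / (2 * N\<^sup>2 * n)"
    using n N by (simp add: B_def field_simps power2_eq_square)
  finally show ?thesis
    unfolding R_def .
qed

lemma add_two_le_two_power: "2 \<le> d \<Longrightarrow> d + 2 \<le> (2 :: nat) ^ d"
  by (induction d rule: dec_induct) simp_all

theorem mainTheorem2:
  fixes d :: nat and F :: real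
  assumes "d \<ge> 2" and "0 < F" and "F < 1"
  shows "eta_dp d F > 1 \<longleftrightarrow> F > F_th_dp d"
proof -
  define N :: real where "N = 2 ^ d"
  have "real d + 2 \<le> N"
    unfolding N_def using add_two_le_two_power[OF assms(1)]
    by (metis of_nat_add of_nat_le_iff of_nat_numeral of_nat_power)
  moreover have "eta_dp d F = d * (1 - (4 * F * ((1 - F) / (N - 1)) / (F + (1 - F) / (N - 1))
      + (N - 2) * ((1 - F) / (N - 1))))"
    using assms(1) by (simp add: eta_dp_def C_dp_eq N_def)
  moreover have "F_th_dp d = 1 / N + (N - 1) * (N - 2 + sqrt ((N - 2)\<^sup>2 + 8 * N * d)) / (2 * N\<^sup>2 * d)"
    unfolding F_th_dp_def N_def by (simp add: power_add power_mult power2_eq_square mult.commute)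
  ultimately show ?thesis
    using eta_gt_one_iff_threshold[of d N F] assms(1,2) by simp
qed

end
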